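(* Let $n\in\mathbb{N}$. Then $\operatorname{Cong}(\Phi_n(t)) = 1$ if $n$ is square-free, and $\operatorname{Cong}(\Phi_n(t)) = 0$ if $n$ is not square-free. Moreover, $\operatorname{Cong}(\Psi_n(t)) = 0$ if and only if $n$ is composite.
   Context: $\Phi_n(t)$ is the $n$-th cyclotomic polynomial and $\Psi_n(t) := 1+t+\cdots+t^{n-1} = (t^n-1)/(t-1)$. For $r(t)=\sum_ia_it^i\in\mathbb{Z}[t]$ and integers $u>j\ge0$, $r_{u,j}(t):=\sum_{i\equiv j\bmod u}a_it^i$; $\operatorname{Cong}(r(t))$ is the non-negative generator of the ideal $\mathbb{Z}\cap\bigcap_{1<u\le\deg(r(t))+1}\big(r_{u,0}(t)\mathbb{Z}[t]+\cdots+r_{u,u-1}(t)\mathbb{Z}[t]\big)$. *)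

theory Defs
  imports Complex_Main "HOL-Computational_Algebra.Polynomial" "HOL-Computational_Algebra.Squarefree"
    "HOL-Computational_Algebra.Primes"
begin

definition cyclotomic_complex :: "nat \<Rightarrow> complex poly" where
  "cyclotomic_complex n =
     (\<Prod>k\<in>{k. k < n \<and> coprime k n}. [:- cis (2 * pi * real k / real n), 1:])"

text \<open>The n-th cyclotomic polynomial Phi_n as an integer polynomial (its coefficients are integers).\<close>
definition cyclotomic :: "nat \<Rightarrow> int poly" where
  "cyclotomic n = (THE p. map_poly of_int p = cyclotomic_complex n)"

definition Psi :: "nat \<Rightarrow> int poly" where
  "Psi n = (\<Sum>i<n. monom 1 i)"

definition part_poly :: "int poly \<Rightarrow> nat \<Rightarrow> nat \<Rightarrow> int poly" where
  "part_poly r u j = (\<Sum>i\<le>degree r. if i mod u = j then monom (coeff r i) i else 0)"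

definition cong_ideal :: "int poly \<Rightarrow> int set" where
  "cong_ideal r = {c. \<forall>u. 1 < u \<and> u \<le> degree r + 1 \<longrightarrow>
      (\<exists>q :: nat \<Rightarrow> int poly. [:c:] = (\<Sum>j<u. part_poly r u j * q j))}"

definition Cong :: "int poly \<Rightarrow> int" where
  "Cong r = (THE g. g \<ge> 0 \<and> cong_ideal r = {k * g | k. True})"

end

theory Submission
  imports Defs "HOL-Analysis.Complex_Transcendental"
begin

(* If r divides F, then F_{u,0} lies in the ideal generated by r_{u,0}, ..., r_{u,u-1}, because
   (r h)_{u,0} is the sum of the products r_{u,j} h_{u,-j}. Hence Cong r = 1 as soon as, for every
   u > 1, r divides some F with F_{u,0} = +-1: for Phi_n take F = t^n - 1 if u does not divide n, and
   F = 1 + t^m + ... + t^{(p-1)m} if n = p m for a prime p dividing u but not m; for Psi_n with n = 1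
   or n prime take F = t^n - 1 or, when u = n, F = Psi_n itself.
   Conversely, if r vanishes at the u points zeta_u^k alpha (alpha <> 0), then r has degree at least u
   and the roots-of-unity filter shows that every r_{u,j} vanishes at alpha, so the ideal meets Z only
   in 0. With alpha = zeta_n and n = p m this applies to Phi_n when p divides m (all exponents k m + 1
   are prime to n) and to Psi_n when p, m > 1 (no exponent k m + 1 is a multiple of n). *)

lemma coeff_map_poly_of_int [simp]: "coeff (map_poly of_int p) i = of_int (coeff p i)"
  by (simp add: coeff_map_poly)

lemma map_poly_of_int_add [simp]:
  "map_poly of_int (p + q) = (map_poly of_int p + map_poly of_int q :: 'a :: ring_1 poly)"
  by (intro poly_eqI) simp

lemma map_poly_of_int_diff [simp]:
  "map_poly of_int (p - q) = (map_poly of_int p - map_poly of_int q :: 'a :: ring_1 poly)"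
  by (intro poly_eqI) simp

lemma map_poly_of_int_mult [simp]:
  "map_poly of_int (p * q) = (map_poly of_int p * map_poly of_int q :: 'a :: comm_ring_1 poly)"
  by (intro poly_eqI) (simp add: coeff_mult)

lemma map_poly_of_int_prod:
  "map_poly of_int (prod f A) = (\<Prod>x\<in>A. map_poly of_int (f x) :: 'a :: comm_ring_1 poly)"
  by (induction A rule: infinite_finite_induct) auto

lemma map_poly_of_int_sum:
  "map_poly of_int (sum f A) = (\<Sum>x\<in>A. map_poly of_int (f x) :: 'a :: ring_1 poly)"
  by (induction A rule: infinite_finite_induct) auto

lemma map_poly_of_int_eq_iff [simp]:
  "map_poly of_int p = (map_poly of_int q :: 'a :: ring_char_0 poly) \<longleftrightarrow> p = q"
  by (auto simp: poly_eq_iff)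

lemma map_poly_of_int_eq_0_iff [simp]:
  "map_poly of_int p = (0 :: 'a :: ring_char_0 poly) \<longleftrightarrow> p = 0"
  using map_poly_of_int_eq_iff[of p 0] by simp

lemma degree_map_poly_of_int [simp]:
  "degree (map_poly (of_int :: int \<Rightarrow> 'a :: ring_char_0) p) = degree p"
  by (rule degree_map_poly) simp

lemma lead_coeff_map_poly_of_int:
  "lead_coeff (map_poly of_int p :: 'a :: ring_char_0 poly) = of_int (lead_coeff p)"
  by simp

lemma map_poly_of_int_quotient_by_monic:
  fixes Q F :: "int poly" and G :: "'a :: {idom, ring_char_0} poly"
  assumes monic: "lead_coeff Q = 1" and F: "map_poly of_int F = map_poly of_int Q * G"
  obtains H where "G = map_poly of_int H"
proof -
  have "Q \<noteq> 0" using monic by auto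
  obtain q r where "pseudo_divmod F Q = (q, r)" by (cases "pseudo_divmod F Q") auto
  from pseudo_divmod[OF \<open>Q \<noteq> 0\<close> this] monic
  have "F = Q * q + r" and r: "r = 0 \<or> degree r < degree Q" by auto
  then have eq: "map_poly of_int Q * (G - map_poly of_int q) = (map_poly of_int r :: 'a poly)"
    using F by (simp add: algebra_simps)
  have "G - map_poly of_int q = 0"
  proof (rule ccontr)
    assume "G - map_poly of_int q \<noteq> 0"
    with \<open>Q \<noteq> 0\<close> have "map_poly of_int Q * (G - map_poly of_int q) \<noteq> 0"
      and "degree Q \<le> degree (map_poly of_int Q * (G - map_poly of_int q))"
      by (auto simp: degree_mult_eq)
    then show False using r by (auto simp: eq)
  qed
  then show ?thesis using that by auto
qed

lemma monic_dvd_antisym: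
  fixes p q :: "'a :: idom poly"
  assumes "lead_coeff p = 1" "lead_coeff q = 1" "p dvd q" "degree p = degree q"
  shows "p = q"
proof -
  obtain r where q: "q = p * r" using assms(3) by blast
  with assms have "r \<noteq> 0" "p \<noteq> 0" by auto
  with q assms(4) have "degree r = 0" by (simp add: degree_mult_eq)
  then obtain c where "r = [:c:]" by (rule degree_eq_zeroE)
  have "lead_coeff q = lead_coeff p * c" by (simp add: q \<open>r = [:c:]\<close> lead_coeff_mult)
  with assms(1,2) have "c = 1" by simp
  with q \<open>r = [:c:]\<close> show ?thesis by simp
qed

lemma prod_linear_factors_dvd:
  fixes p :: "'a :: idom poly"
  assumes "finite A" "inj_on f A" "\<And>a. a \<in> A \<Longrightarrow> poly p (f a) = 0"
  shows "(\<Prod>a\<in>A. [:- f a, 1:]) dvd p"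
  using assms
proof (induction A arbitrary: p rule: finite_induct)
  case (insert b A)
  then obtain q where p: "p = [:- f b, 1:] * q"
    using poly_eq_0_iff_dvd by blast
  have "poly q (f a) = 0" if "a \<in> A" for a
  proof -
    have "f a \<noteq> f b" using insert that by (auto simp: inj_on_def)
    moreover have "poly p (f a) = 0" using insert.prems that by simp
    ultimately show ?thesis by (simp add: p)
  qed
  then have "(\<Prod>a\<in>A. [:- f a, 1:]) dvd q"
    using insert by (simp add: inj_on_def)
  then show ?case
    unfolding prod.insert[OF insert.hyps] p by (rule mult_dvd_mono[OF dvd_refl])
qed simp

lemma degree_monom_1_minus_1:
  "n > 0 \<Longrightarrow> degree (monom (1 :: 'a :: comm_ring_1) n - 1) = n"
  using degree_add_eq_left[of "-1" "monom (1 :: 'a) n"] by (simp add: degree_monom_eq)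

lemma lead_coeff_monom_1_minus_1:
  "n > 0 \<Longrightarrow> lead_coeff (monom (1 :: 'a :: comm_ring_1) n - 1) = 1"
  by (simp add: degree_monom_1_minus_1)

lemma poly_eq_sum_upto:
  fixes p :: "'a :: comm_semiring_1 poly"
  assumes "degree p \<le> N"
  shows "poly p x = (\<Sum>i\<le>N. coeff p i * x ^ i)"
  by (subst poly_as_sum_of_monoms'[OF assms, symmetric]) (simp add: poly_sum poly_monom)

section \<open>Roots of unity\<close>

definition root_unity :: "nat \<Rightarrow> nat \<Rightarrow> complex" where
  "root_unity n k = cis (2 * pi * real k / real n)"

lemma root_unity_conv_exp:
  "root_unity n k = exp (2 * of_real pi * \<i> * of_nat k / of_nat n)"
  unfolding root_unity_def cis_conv_exp by (simp add: mult_ac)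

lemma root_unity_eq_iff:
  "n > 0 \<Longrightarrow> root_unity n j = root_unity n k \<longleftrightarrow> j mod n = k mod n"
  unfolding root_unity_conv_exp by (rule complex_root_unity_eq) simp

lemma root_unity_eq_1_iff: "n > 0 \<Longrightarrow> root_unity n k = 1 \<longleftrightarrow> n dvd k"
  unfolding root_unity_conv_exp by (rule complex_root_unity_eq_1) simp

lemma root_unity_nonzero [simp]: "root_unity n k \<noteq> 0"
  by (simp add: root_unity_def)

lemma root_unity_mult: "root_unity n j * root_unity n k = root_unity n (j + k)"
  by (simp add: root_unity_def cis_mult add_divide_distrib algebra_simps)

lemma root_unity_power: "root_unity n k ^ m = root_unity n (k * m)"
  unfolding root_unity_def Complex.DeMoivre by (simp add: mult_ac)

lemma root_unity_mod: "n > 0 \<Longrightarrow> root_unity n (k mod n) = root_unity n k"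
  by (simp add: root_unity_eq_iff)

lemma root_unity_of_dvd:
  assumes "d dvd n" "n > 0"
  shows "root_unity d k = root_unity n (k * (n div d))"
  using assms by (auto simp: root_unity_def mult_ac elim!: dvdE)

lemma root_unity_mult_root_unity_one:
  assumes "n = p * m" "n > 0"
  shows "root_unity p k * root_unity n 1 = root_unity n (k * m + 1)"
  using assms root_unity_of_dvd[of p n k] by (simp add: root_unity_mult)

lemma sum_root_unity_powers:
  assumes "u > 0"
  shows "(\<Sum>k<u. root_unity u (m * k)) = (if u dvd m then of_nat u else 0)"
proof (cases "u dvd m")
  case True
  with assms have "root_unity u (m * k) = 1" for k
    by (simp add: root_unity_eq_1_iff)
  with True show ?thesis by simp
next
  case False
  define z where "z = root_unity u m"
  have "z \<noteq> 1" and "z ^ u = 1"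
    using False assms by (simp_all add: z_def root_unity_eq_1_iff root_unity_power)
  then have "(\<Sum>k<u. z ^ k) = 0"
    using power_diff_1_eq[of z u] by simp
  then show ?thesis
    using False by (simp add: z_def root_unity_power)
qed

lemma prod_root_unity_linear_factors:
  assumes "n > 0"
  shows "(\<Prod>k<n. [:- root_unity n k, 1:]) = monom 1 n - 1"
proof (rule monic_dvd_antisym)
  show "degree (\<Prod>k<n. [:- root_unity n k, 1:]) = degree (monom (1 :: complex) n - 1)"
    using assms by (simp add: degree_prod_eq_sum_degree degree_monom_1_minus_1)
  show "lead_coeff (monom (1 :: complex) n - 1) = 1"
    using assms by (rule lead_coeff_monom_1_minus_1)
  show "(\<Prod>k<n. [:- root_unity n k, 1:]) dvd monom 1 n - 1"
  proof (rule prod_linear_factors_dvd)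
    show "inj_on (root_unity n) {..<n}"
      using assms by (auto simp: inj_on_def root_unity_eq_iff)
    show "poly (monom 1 n - 1) (root_unity n k) = 0" for k
      using assms by (simp add: poly_monom root_unity_power root_unity_eq_1_iff)
  qed simp
qed (simp add: lead_coeff_prod)

section \<open>Cyclotomic polynomials and Psi\<close>

definition reduced_residues :: "nat \<Rightarrow> nat set" where
  "reduced_residues n = {k. k < n \<and> coprime k n}"

lemma finite_reduced_residues [simp]: "finite (reduced_residues n)"
  by (simp add: reduced_residues_def)

lemma cyclotomic_complex_altdef:
  "cyclotomic_complex n = (\<Prod>k\<in>reduced_residues n. [:- root_unity n k, 1:])"
  unfolding cyclotomic_complex_def reduced_residues_def root_unity_def ..

lemma lead_coeff_cyclotomic_complex [simp]: "lead_coeff (cyclotomic_complex n) = 1"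
  by (simp add: cyclotomic_complex_altdef lead_coeff_prod)

lemma bij_betw_reduced_residues_gcd_eq:
  assumes "d dvd n" "n > 0"
  shows "bij_betw (\<lambda>k. k * (n div d)) (reduced_residues d) {j. j < n \<and> gcd j n = n div d}"
proof -
  obtain e where n: "n = d * e" using assms(1) ..
  with assms have "d > 0" "e > 0" by auto
  have "j \<in> (\<lambda>k. k * e) ` reduced_residues d" if jn: "j < d * e" "gcd j (d * e) = e" for j
  proof -
    obtain k where j: "j = k * e" using jn(2) by (metis dvd_mult_div_cancel gcd_dvd1 mult.commute)
    with jn have "k < d" and "e * gcd k d = e * 1"
      by (simp_all add: gcd_mult_left mult.commute[of _ e])
    with \<open>e > 0\<close> have "k < d" "gcd k d = 1" by simp_all
    then show ?thesis by (auto simp: j reduced_residues_def coprime_iff_gcd_eq_1)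
  qed
  moreover have "k * e < d * e" "gcd (k * e) (d * e) = e" if "k \<in> reduced_residues d" for k
  proof -
    from that have "k < d" "gcd k d = 1" by (simp_all add: reduced_residues_def)
    with \<open>e > 0\<close> show "k * e < d * e" "gcd (k * e) (d * e) = e"
      by (simp_all add: gcd_mult_right gcd.commute)
  qed
  ultimately show ?thesis
    using \<open>d > 0\<close> \<open>e > 0\<close> by (auto simp: n bij_betw_def inj_on_def)
qed

lemma prod_cyclotomic_complex_divisors:
  assumes "n > 0"
  shows "(\<Prod>d | d dvd n. cyclotomic_complex d) = monom 1 n - 1"
proof -
  define L where "L j = [:- root_unity n j, 1:]" for j
  define G where "G d = {j. j < n \<and> gcd j n = n div d}" for d
  have div_div: "n div (n div d) = d" if "d dvd n" for d
    using div_div_eq_right[of d n n] that assms by simp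
  have cover: "{..<n} = (\<Union>d\<in>{d. d dvd n}. G d)"
  proof (intro equalityI subsetI)
    fix j assume "j \<in> {..<n}"
    then have "j \<in> G (n div gcd j n)"
      by (simp add: G_def div_div)
    moreover have "n div gcd j n dvd n"
      by (metis dvd_mult_div_cancel dvd_triv_right gcd_dvd2)
    ultimately show "j \<in> (\<Union>d\<in>{d. d dvd n}. G d)" by blast
  qed (auto simp: G_def)
  have "(\<Prod>d | d dvd n. cyclotomic_complex d) = (\<Prod>d | d dvd n. \<Prod>j\<in>G d. L j)"
  proof (intro prod.cong refl)
    fix d assume "d \<in> {d. d dvd n}"
    then have "d dvd n" by simp
    from prod.reindex_bij_betw[OF bij_betw_reduced_residues_gcd_eq[OF this assms], of L]
    show "cyclotomic_complex d = (\<Prod>j\<in>G d. L j)"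
      using \<open>d dvd n\<close> assms
      by (simp add: G_def L_def cyclotomic_complex_altdef root_unity_of_dvd)
  qed
  also have "\<dots> = (\<Prod>j<n. L j)"
    unfolding cover using assms
    by (intro prod.UNION_disjoint[symmetric]) (auto simp: G_def, metis div_div)
  also have "\<dots> = monom 1 n - 1"
    unfolding L_def by (rule prod_root_unity_linear_factors[OF assms])
  finally show ?thesis .
qed

lemma cyclotomic_complex_integral: "\<exists>p. map_poly of_int p = cyclotomic_complex n"
proof (induction n rule: less_induct)
  case (less n)
  show ?case
  proof (cases "n = 0")
    case True
    then show ?thesis
      by (intro exI[of _ 1]) (simp add: cyclotomic_complex_altdef reduced_residues_def)
  next
    case False
    obtain P where P: "\<And>d. d < n \<Longrightarrow> map_poly of_int (P d) = cyclotomic_complex d"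
      using less.IH by metis
    define D where "D = {d. d dvd n} - {n}"
    have D: "finite D" "n \<notin> D" "{d. d dvd n} = insert n D" "\<And>d. d \<in> D \<Longrightarrow> d < n"
      using False by (auto simp: D_def dest: dvd_imp_le)
    define Q where "Q = (\<Prod>d\<in>D. P d)"
    have "lead_coeff (P d) = 1" if "d \<in> D" for d
      using P[OF D(4)[OF that]] lead_coeff_cyclotomic_complex[of d]
      by (metis lead_coeff_map_poly_of_int of_int_eq_1_iff)
    then have "lead_coeff Q = 1"
      by (simp add: Q_def lead_coeff_prod)
    moreover have "map_poly of_int (monom 1 n - 1) = map_poly of_int Q * cyclotomic_complex n"
    proof -
      have "map_poly of_int (monom 1 n - 1) = (\<Prod>d | d dvd n. cyclotomic_complex d)"
        using False by (simp add: map_poly_monom prod_cyclotomic_complex_divisors)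
      also have "\<dots> = cyclotomic_complex n * (\<Prod>d\<in>D. cyclotomic_complex d)"
        using D by simp
      also have "(\<Prod>d\<in>D. cyclotomic_complex d) = map_poly of_int Q"
        using D(4) by (simp add: Q_def map_poly_of_int_prod P)
      finally show ?thesis by (simp add: mult.commute)
    qed
    ultimately obtain H where "cyclotomic_complex n = map_poly of_int H"
      by (rule map_poly_of_int_quotient_by_monic)
    then show ?thesis by metis
  qed
qed

lemma map_poly_of_int_cyclotomic [simp]:
  "map_poly of_int (cyclotomic n) = cyclotomic_complex n"
proof -
  obtain p where p: "map_poly of_int p = cyclotomic_complex n"
    using cyclotomic_complex_integral by blast
  then have "cyclotomic n = p"
    unfolding cyclotomic_def by (rule the1_equality[rotated]) (auto simp: p[symmetric])
  with p show ?thesis by simp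
qed

lemma cyclotomic_nonzero: "cyclotomic n \<noteq> 0"
  using lead_coeff_cyclotomic_complex[of n] by (auto simp flip: map_poly_of_int_cyclotomic)

lemma prod_cyclotomic_divisors:
  "n > 0 \<Longrightarrow> (\<Prod>d | d dvd n. cyclotomic d) = monom 1 n - 1"
  by (simp flip: map_poly_of_int_eq_iff[where 'a = complex]
      add: map_poly_of_int_prod map_poly_monom prod_cyclotomic_complex_divisors)

lemma cyclotomic_dvd_monom_minus_1: "n > 0 \<Longrightarrow> cyclotomic n dvd monom 1 n - 1"
  by (metis prod_cyclotomic_divisors dvd_prodI finite_divisors_nat mem_Collect_eq dvd_refl)

lemma poly_cyclotomic_root_unity:
  assumes "n > 0" "coprime k n"
  shows "poly (map_poly of_int (cyclotomic n)) (root_unity n k) = 0"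
proof -
  have "k mod n \<in> reduced_residues n"
    using assms by (simp add: reduced_residues_def)
  moreover have "poly [:- root_unity n (k mod n), 1:] (root_unity n k) = 0"
    using assms(1) by (simp add: root_unity_mod)
  ultimately show ?thesis
    by (auto simp: cyclotomic_complex_altdef poly_prod)
qed

definition geometric_poly :: "nat \<Rightarrow> nat \<Rightarrow> int poly" where
  "geometric_poly m k = (\<Sum>i<k. monom 1 (m * i))"

lemma geometric_poly_mult: "(monom 1 m - 1) * geometric_poly m k = monom 1 (m * k) - 1"
proof -
  have "monom 1 (m * k) - 1 = monom (1 :: int) m ^ k - 1"
    by (simp add: monom_power mult.commute)
  also have "\<dots> = (monom 1 m - 1) * (\<Sum>i<k. monom 1 m ^ i)"
    by (rule power_diff_1_eq)
  also have "(\<Sum>i<k. monom (1 :: int) m ^ i) = geometric_poly m k"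
    by (simp add: geometric_poly_def monom_power mult.commute)
  finally show ?thesis ..
qed

lemma cyclotomic_dvd_geometric_poly:
  assumes "1 < p" "m > 0"
  shows "cyclotomic (p * m) dvd geometric_poly m p"
proof -
  define A where "A = {d. d dvd p * m}"
  define B where "B = {d. d dvd m}"
  have "B \<subseteq> A" "finite A" "p * m \<in> A - B"
    using assms by (auto simp: A_def B_def dest: dvd_imp_le)
  have "(monom 1 m - 1) * geometric_poly m p = monom 1 (p * m) - 1"
    by (simp add: geometric_poly_mult mult.commute[of m p])
  also have "\<dots> = (\<Prod>d\<in>A. cyclotomic d)"
    using assms by (simp add: A_def prod_cyclotomic_divisors)
  also have "\<dots> = (monom 1 m - 1) * (\<Prod>d\<in>A - B. cyclotomic d)"
    using assms \<open>B \<subseteq> A\<close> \<open>finite A\<close>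
    by (simp add: prod.subset_diff[of B A] B_def prod_cyclotomic_divisors mult.commute)
  moreover have "monom (1 :: int) m - 1 \<noteq> 0"
    using lead_coeff_monom_1_minus_1[OF assms(2), where 'a = int] by fastforce
  ultimately have "geometric_poly m p = (\<Prod>d\<in>A - B. cyclotomic d)"
    by simp
  then show ?thesis
    using \<open>finite A\<close> \<open>p * m \<in> A - B\<close> by (simp add: dvd_prodI)
qed

lemma Psi_eq_geometric_poly: "Psi n = geometric_poly 1 n"
  by (simp add: Psi_def geometric_poly_def)

lemma coeff_Psi: "coeff (Psi n) i = (if i < n then 1 else 0)"
  by (simp add: Psi_def coeff_sum)

lemma Psi_nonzero: "n > 0 \<Longrightarrow> Psi n \<noteq> 0"
  using coeff_Psi[of n 0] by auto

lemma poly_Psi_root_unity: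
  assumes "n > 0" "\<not> n dvd k"
  shows "poly (map_poly of_int (Psi n)) (root_unity n k) = 0"
proof -
  define z where "z = root_unity n k"
  have "z \<noteq> 1" "z ^ n = 1"
    using assms by (simp_all add: z_def root_unity_eq_1_iff root_unity_power)
  then have "(\<Sum>i<n. z ^ i) = 0"
    using power_diff_1_eq[of z n] by simp
  then show ?thesis
    by (simp add: z_def Psi_def map_poly_of_int_sum poly_sum map_poly_monom poly_monom)
qed

section \<open>The polynomials r_{u,j}\<close>

lemma dvd_add_diff_iff_mod_eq:
  fixes i j u :: nat
  assumes "j < u"
  shows "u dvd i + (u - j) \<longleftrightarrow> i mod u = j"
  by (metis Nat.add_diff_assoc add_gr_0 assms dvd_minus_mod
    less_or_eq_imp_le mod_add_self2 mod_nat_eqI zero_less_diff)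

lemma mod_eq_complement_iff:
  fixes x y u :: nat
  assumes "x < u"
  shows "y mod u = (u - x) mod u \<longleftrightarrow> u dvd x + y"
proof (cases "x = 0")
  case False
  then have "u - x < u" using assms by simp
  with dvd_add_diff_iff_mod_eq[OF this, of y] assms show ?thesis
    by (simp add: add.commute)
qed (simp add: dvd_eq_mod_eq_0)

lemma dvd_mod_add_diff_iff:
  fixes a i u :: nat
  assumes "a \<le> i"
  shows "u dvd a mod u + (i - a) \<longleftrightarrow> u dvd i"
  by (metis assms dvd_eq_mod_eq_0 le_add_diff_inverse mod_add_left_eq)

lemma coeff_part_poly: "coeff (part_poly r u j) i = (if i mod u = j then coeff r i else 0)"
proof -
  have "coeff (part_poly r u j) i =
      (\<Sum>i'\<le>degree r. if i' = i then (if i mod u = j then coeff r i else 0) else 0)"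
    unfolding part_poly_def coeff_sum by (intro sum.cong refl) (auto simp: coeff_monom)
  then show ?thesis
    by (auto simp: coeff_eq_0 not_le)
qed

lemma degree_part_poly_le: "degree (part_poly r u j) \<le> degree r"
  by (rule degree_le) (simp add: coeff_part_poly coeff_eq_0)

lemma part_poly_mult_0:
  assumes "u > 0"
  shows "part_poly (f * g) u 0 = (\<Sum>j<u. part_poly f u j * part_poly g u ((u - j) mod u))"
proof (rule poly_eqI)
  fix i
  have "coeff (\<Sum>j<u. part_poly f u j * part_poly g u ((u - j) mod u)) i
      = (\<Sum>a\<le>i. \<Sum>j<u. (if a mod u = j then coeff f a else 0) *
            (if (i - a) mod u = (u - j) mod u then coeff g (i - a) else 0))"
    by (simp add: coeff_sum coeff_mult coeff_part_poly sum.swap[of _ "{..<u}"])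
  also have "\<dots> = (\<Sum>a\<le>i. if u dvd i then coeff f a * coeff g (i - a) else 0)"
  proof (intro sum.cong refl)
    fix a assume "a \<in> {..i}"
    then have "(i - a) mod u = (u - a mod u) mod u \<longleftrightarrow> u dvd i"
      using assms mod_eq_complement_iff[of "a mod u" u "i - a"] dvd_mod_add_diff_iff
      by simp
    then show "(\<Sum>j<u. (if a mod u = j then coeff f a else 0) *
            (if (i - a) mod u = (u - j) mod u then coeff g (i - a) else 0))
        = (if u dvd i then coeff f a * coeff g (i - a) else 0)"
      using assms by (simp add: if_distrib[of "\<lambda>x. x * _"] sum.delta' cong: if_cong)
  qed
  also have "\<dots> = coeff (part_poly (f * g) u 0) i"
    by (simp add: coeff_part_poly coeff_mult dvd_eq_mod_eq_0)
  finally show "coeff (part_poly (f * g) u 0) i =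
      coeff (\<Sum>j<u. part_poly f u j * part_poly g u ((u - j) mod u)) i" by simp
qed

lemma part_poly_geometric_poly:
  assumes "k > 0" and multiples: "\<And>i. i < k \<Longrightarrow> u dvd m * i \<Longrightarrow> i = 0"
  shows "part_poly (geometric_poly m k) u 0 = [:1:]"
proof (rule poly_eqI)
  fix j
  have "coeff (part_poly (geometric_poly m k) u 0) j = (\<Sum>i<k. if j mod u = 0 \<and> m * i = j then 1 else 0)"
    by (simp add: coeff_part_poly geometric_poly_def coeff_sum coeff_monom)
  also have "\<dots> = (\<Sum>i<k. if i = 0 \<and> j = 0 then 1 else 0)"
  proof (intro sum.cong refl)
    fix i assume "i \<in> {..<k}"
    with multiples[of i] have "j mod u = 0 \<and> m * i = j \<longleftrightarrow> i = 0 \<and> j = 0"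
      by (auto simp flip: dvd_eq_mod_eq_0)
    then show "(if j mod u = 0 \<and> m * i = j then 1 else 0) = (if i = 0 \<and> j = 0 then 1 else (0 :: int))"
      by simp
  qed
  also have "\<dots> = coeff [:1:] j"
    using assms(1) by (simp add: coeff_pCons')
  finally show "coeff (part_poly (geometric_poly m k) u 0) j = coeff [:1:] j" .
qed

lemma part_poly_monom_minus_1:
  assumes "\<not> u dvd n"
  shows "part_poly (monom 1 n - 1) u 0 = [:-1:]"
proof (rule poly_eqI)
  fix i
  have "n \<noteq> 0" using assms by (metis dvd_0_right)
  moreover have "n mod u \<noteq> 0" using assms by (simp add: mod_greater_zero_iff_not_dvd)
  ultimately show "coeff (part_poly (monom 1 n - 1) u 0) i = coeff [:-1:] i"
    by (auto simp: coeff_part_poly coeff_monom coeff_pCons')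
qed

lemma poly_part_poly_filter:
  fixes r :: "int poly" and \<alpha> :: complex
  assumes "u > 0" "j < u"
  shows "of_nat u * poly (map_poly of_int (part_poly r u j)) \<alpha>
       = (\<Sum>k<u. root_unity u ((u - j) * k) * poly (map_poly of_int r) (root_unity u k * \<alpha>))"
proof -
  define N where "N = degree r"
  define c where "c i = (of_int (coeff r i) :: complex) * \<alpha> ^ i" for i
  have "(\<Sum>k<u. root_unity u ((u - j) * k) * poly (map_poly of_int r) (root_unity u k * \<alpha>))
      = (\<Sum>k<u. \<Sum>i\<le>N. c i * root_unity u ((i + (u - j)) * k))"
    by (simp add: poly_eq_sum_upto[where N = N] N_def c_def sum_distrib_left power_mult_distrib
        root_unity_power root_unity_mult algebra_simps)
  also have "\<dots> = (\<Sum>i\<le>N. c i * (\<Sum>k<u. root_unity u ((i + (u - j)) * k)))"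
    by (simp add: sum.swap[of _ "{..<u}"] sum_distrib_left)
  also have "\<dots> = (\<Sum>i\<le>N. if i mod u = j then of_nat u * c i else 0)"
    by (intro sum.cong refl)
       (simp only: sum_root_unity_powers[OF assms(1)] dvd_add_diff_iff_mod_eq[OF assms(2)], simp)
  also have "\<dots> = of_nat u * poly (map_poly of_int (part_poly r u j)) \<alpha>"
    by (auto simp: poly_eq_sum_upto[where N = N] N_def c_def degree_part_poly_le
        coeff_part_poly sum_distrib_left intro!: sum.cong)
  finally show ?thesis ..
qed

section \<open>Cong\<close>

definition part_ideal :: "int poly \<Rightarrow> nat \<Rightarrow> int poly set" where
  "part_ideal r u = {\<Sum>j<u. part_poly r u j * q j | q. True}"

lemma mult_mem_part_ideal: "p \<in> part_ideal r u \<Longrightarrow> p * s \<in> part_ideal r u"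
proof -
  assume "p \<in> part_ideal r u"
  then obtain q where "p = (\<Sum>j<u. part_poly r u j * q j)"
    by (auto simp: part_ideal_def)
  then have "p * s = (\<Sum>j<u. part_poly r u j * (q j * s))"
    by (simp add: sum_distrib_right mult.assoc)
  then show ?thesis
    unfolding part_ideal_def by (intro CollectI exI[of _ "\<lambda>j. q j * s"]) simp
qed

lemma part_poly_0_mem_part_ideal:
  assumes "u > 0" "r dvd F"
  shows "part_poly F u 0 \<in> part_ideal r u"
proof -
  obtain h where "F = r * h" using assms(2) ..
  then show ?thesis
    unfolding part_ideal_def using part_poly_mult_0[OF assms(1), of r h]
    by (intro CollectI exI[of _ "\<lambda>j. part_poly h u ((u - j) mod u)"]) simp
qed

lemma one_mem_part_ideal:
  assumes "u > 0" "r dvd F" "part_poly F u 0 = [:e:]" "\<bar>e\<bar> = 1"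
  shows "1 \<in> part_ideal r u"
proof -
  have "part_poly F u 0 * [:e:] \<in> part_ideal r u"
    using assms(1,2) by (intro mult_mem_part_ideal part_poly_0_mem_part_ideal)
  moreover have "e * e = 1"
    using assms(4) by (metis abs_mult_self_eq mult_1)
  ultimately show ?thesis
    by (simp add: assms(3) one_pCons)
qed

lemma Cong_eqI:
  assumes "g \<ge> 0" "cong_ideal r = {k * g | k. True}"
  shows "Cong r = g"
  unfolding Cong_def
proof (rule the_equality)
  fix g' assume g': "g' \<ge> 0 \<and> cong_ideal r = {k * g' | k. True}"
  then have "g' \<in> {k * g | k. True}" "g \<in> {k * g' | k. True}"
    using assms(2) by (metis (mono_tags, lifting) mem_Collect_eq mult_1)+
  then obtain a b where "g' = a * g" "g = b * g'" by blast
  then have "g dvd g'" "g' dvd g" by (metis dvd_triv_right)+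
  with g' assms(1) show "g' = g" by (simp add: zdvd_antisym_nonneg)
qed (use assms in simp)

lemma Cong_eq_1:
  assumes "\<And>u. 1 < u \<Longrightarrow> u \<le> degree r + 1 \<Longrightarrow> 1 \<in> part_ideal r u"
  shows "Cong r = 1"
proof (rule Cong_eqI)
  have "[:c:] \<in> part_ideal r u" if "1 < u" "u \<le> degree r + 1" for c u
    using mult_mem_part_ideal[OF assms[OF that], of "[:c:]"] by simp
  then show "cong_ideal r = {k * 1 | k. True}"
    by (auto simp: cong_ideal_def part_ideal_def)
qed simp

lemma Cong_eq_0:
  assumes "1 < u" "r \<noteq> 0" "\<alpha> \<noteq> 0"
    and roots: "\<And>k. k < u \<Longrightarrow> poly (map_poly of_int r) (root_unity u k * \<alpha>) = 0"
  shows "Cong r = 0"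
proof (rule Cong_eqI)
  have "u \<le> degree r"
  proof -
    have "inj_on (\<lambda>k. root_unity u k * \<alpha>) {..<u}"
      using assms by (auto simp: inj_on_def root_unity_eq_iff)
    then have "u = card ((\<lambda>k. root_unity u k * \<alpha>) ` {..<u})"
      by (simp add: card_image)
    also have "\<dots> \<le> card {x. poly (map_poly of_int r :: complex poly) x = 0}"
      using assms(2) roots by (intro card_mono poly_roots_finite) auto
    also have "\<dots> \<le> degree r"
      using card_poly_roots_bound[of "map_poly of_int r :: complex poly"] assms(2) by simp
    finally show ?thesis .
  qed
  have parts: "poly (map_poly of_int (part_poly r u j)) \<alpha> = 0" if "j < u" for j
    using poly_part_poly_filter[of u j r \<alpha>] assms that by (simp add: roots)
  have "c = 0" if "c \<in> cong_ideal r" for c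
  proof -
    from that \<open>1 < u\<close> \<open>u \<le> degree r\<close> obtain q where q: "[:c:] = (\<Sum>j<u. part_poly r u j * q j)"
      by (auto simp: cong_ideal_def)
    have "(of_int c :: complex) = poly (map_poly of_int [:c:]) \<alpha>"
      by (simp add: map_poly_pCons)
    also have "\<dots> = 0"
      by (simp add: q map_poly_of_int_sum poly_sum parts)
    finally show ?thesis by simp
  qed
  then show "cong_ideal r = {k * 0 | k. True}"
    by (auto simp: cong_ideal_def intro: exI[of _ "\<lambda>_. 0"])
qed simp

lemma Cong_cyclotomic_squarefree:
  assumes "n > 0" "squarefree n"
  shows "Cong (cyclotomic n) = 1"
proof (rule Cong_eq_1)
  fix u :: nat
  assume "1 < u"
  then obtain p where p: "prime p" "p dvd u"
    using prime_factor_nat[of u] by auto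
  show "1 \<in> part_ideal (cyclotomic n) u"
  proof (cases "p dvd n")
    case False
    then have "\<not> u dvd n"
      using p(2) dvd_trans by blast
    with \<open>1 < u\<close> assms(1) show ?thesis
      by (intro one_mem_part_ideal[of _ _ "monom 1 n - 1" "-1"] cyclotomic_dvd_monom_minus_1
          part_poly_monom_minus_1) simp_all
  next
    case True
    then obtain m where n: "n = p * m" ..
    have "\<not> p dvd m"
    proof
      assume "p dvd m"
      then have "p ^ 2 dvd n"
        by (auto simp: n power2_eq_square)
      with assms(2) p(1) show False
        by (metis not_prime_unit squarefree_def)
    qed
    have "part_poly (geometric_poly m p) u 0 = [:1:]"
    proof (rule part_poly_geometric_poly)
      show "0 < p"
        using p(1) by (rule prime_gt_0_nat)
      fix i
      assume "i < p" "u dvd m * i"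
      then have "p dvd m * i"
        using p(2) dvd_trans by blast
      with \<open>\<not> p dvd m\<close> p(1) have "p dvd i"
        by (simp add: prime_dvd_mult_iff)
      with \<open>i < p\<close> show "i = 0"
        by (auto dest: dvd_imp_le)
    qed
    moreover have "cyclotomic n dvd geometric_poly m p"
      using n assms(1) prime_gt_1_nat[OF p(1)] by (simp add: cyclotomic_dvd_geometric_poly)
    ultimately show ?thesis
      using \<open>1 < u\<close> by (intro one_mem_part_ideal[of _ _ _ 1]) simp_all
  qed
qed

lemma Cong_cyclotomic_not_squarefree:
  assumes "n > 0" "\<not> squarefree n"
  shows "Cong (cyclotomic n) = 0"
proof -
  obtain p where p: "prime p" "p ^ 2 dvd n"
    using assms squarefree_factorial_semiring[of n] by auto
  then obtain m where n: "n = p * m" and "p dvd m"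
    by (auto simp: power2_eq_square elim!: dvdE)
  then have "n dvd m * m"
    by (simp add: mult_dvd_mono)
  show ?thesis
  proof (rule Cong_eq_0[of p _ "root_unity n 1"])
    show "1 < p"
      using p(1) by (rule prime_gt_1_nat)
    fix k
    have "coprime (k * m + 1) m"
      using gcd_add_mult[of m k 1] by (simp add: coprime_iff_gcd_eq_1 gcd.commute)
    then have "coprime (k * m + 1) (m * m)"
      by simp
    then have "coprime (k * m + 1) n"
      by (rule coprime_divisors[OF dvd_refl \<open>n dvd m * m\<close>])
    then show "poly (map_poly of_int (cyclotomic n)) (root_unity p k * root_unity n 1) = 0"
      unfolding root_unity_mult_root_unity_one[OF n assms(1)] by (rule poly_cyclotomic_root_unity[OF assms(1)])
  qed (simp_all add: cyclotomic_nonzero)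
qed

lemma Cong_Psi_prime:
  assumes "n = 1 \<or> prime n"
  shows "Cong (Psi n) = 1"
proof (rule Cong_eq_1)
  fix u :: nat
  assume "1 < u"
  have "n > 0"
    using assms prime_gt_0_nat by auto
  show "1 \<in> part_ideal (Psi n) u"
  proof (cases "u dvd n")
    case True
    with \<open>1 < u\<close> assms have "u = n"
      by (auto simp: prime_nat_iff)
    then have "part_poly (geometric_poly 1 n) u 0 = [:1:]"
      using \<open>n > 0\<close> by (intro part_poly_geometric_poly) (auto dest: dvd_imp_le)
    with \<open>1 < u\<close> show ?thesis
      by (intro one_mem_part_ideal[of _ _ "geometric_poly 1 n" 1]) (simp_all add: Psi_eq_geometric_poly)
  next
    case False
    have "Psi n dvd monom 1 n - 1"
      using geometric_poly_mult[of 1 n] by (metis Psi_eq_geometric_poly dvd_triv_right mult_1)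
    with False \<open>1 < u\<close> show ?thesis
      by (intro one_mem_part_ideal[of _ _ "monom 1 n - 1" "-1"]) (simp_all add: part_poly_monom_minus_1)
  qed
qed

lemma Cong_Psi_composite:
  assumes "1 < n" "\<not> prime n"
  shows "Cong (Psi n) = 0"
proof -
  obtain p where p: "prime p" "p dvd n"
    using prime_factor_nat[of n] assms(1) by auto
  from p(2) obtain m where n: "n = p * m" ..
  have "1 < p"
    using p(1) by (rule prime_gt_1_nat)
  have "1 < m"
    using n assms p(1) by (cases "m = 0 \<or> m = 1") auto
  show ?thesis
  proof (rule Cong_eq_0[of p _ "root_unity n 1"])
    fix k
    assume "k < p"
    then have "(k + 1) * m \<le> n"
      using n mult_le_mono1[of "k + 1" p m] by simp
    with \<open>1 < m\<close> have "k * m + 1 < n"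
      by simp
    then have "\<not> n dvd k * m + 1"
      by (auto dest: dvd_imp_le)
    moreover have "n > 0"
      using assms(1) by simp
    ultimately show "poly (map_poly of_int (Psi n)) (root_unity p k * root_unity n 1) = 0"
      unfolding root_unity_mult_root_unity_one[OF n \<open>n > 0\<close>] by (intro poly_Psi_root_unity)
  qed (use \<open>1 < p\<close> assms(1) in \<open>simp_all add: Psi_nonzero\<close>)
qed

theorem proposition4p10:
  fixes n :: nat
  assumes "n \<ge> 1"
  shows "(squarefree n \<longrightarrow> Cong (cyclotomic n) = 1)
       \<and> (\<not> squarefree n \<longrightarrow> Cong (cyclotomic n) = 0)
       \<and> (Cong (Psi n) = 0 \<longleftrightarrow> (n > 1 \<and> \<not> prime n))"
  using assms Cong_cyclotomic_squarefree Cong_cyclotomic_not_squarefree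
    Cong_Psi_prime[of n] Cong_Psi_composite[of n]
  by (cases "n = 1 \<or> prime n") auto

end
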